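(* Let $(S,\gamma)$ be a $C^\infty$ surface with boundary in $\mathbf{R}^3$. Suppose the dual-boundary $\widehat\gamma(t)$ is of type $(1,2,2+r)$ at $t=t_1$ for some positive integer $r$. Then the distance $d=\mathrm{dist}(\gamma(t_1),\widehat\gamma^*(t_1))$ is given by $$d=\left|\frac{\kappa_2\sqrt{\kappa_2^2+\kappa_3^2}}{\kappa_2(\kappa_3'+\kappa_1\kappa_2)+\kappa_3(-\kappa_2'+\kappa_1\kappa_3)}\right|$$ at $t=t_1$.
   Context: $S\subset\mathbf{R}^3$ is a co-oriented immersed $C^\infty$ surface with boundary curve $\gamma(t)$ parametrised by arc length; primes denote $d/dt$. Adapted frame: $\boldsymbol e_1=\gamma'$, $\boldsymbol e_3=\boldsymbol n$ the unit normal, $\boldsymbol e_2=\boldsymbol e_3\times\boldsymbol e_1$; $\kappa_1,\kappa_2,\kappa_3$ are defined by $\boldsymbol e_1'=\kappa_1\boldsymbol e_2+\kappa_2\boldsymbol e_3$, $\boldsymbol e_2'=-\kappa_1\boldsymbol e_1+\kappa_3\boldsymbol e_3$, $\boldsymbol e_3'=-\kappa_2\boldsymbol e_1-\kappa_3\boldsymbol e_2$. The dual-boundary is $\widehat\gamma(t)=[-\gamma(t)\cdot\boldsymbol n(t):\boldsymbol n(t)]\in\mathbf{R}P^{3*}$, the tangent plane $T_{\gamma(t)}S$ viewed in the dual projective space. Its type at $t_1$ is $(a_1,a_2,a_3)$ with $a_i=\min\{m:\mathrm{rank}(\widehat\gamma'(t_1),\dots,\widehat\gamma^{(m)}(t_1))=i\}$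 in affine coordinates. $\widehat\gamma^*(t_1)\in\mathbf{R}P^3$ is the osculating plane of $\widehat\gamma$ at $t_1$ viewed as a point of $\mathbf{R}P^3$; when it lies in $\mathbf{R}^3$ it is the point $x$ solving $x\cdot\boldsymbol n=\gamma\cdot\boldsymbol n$, $x\cdot\boldsymbol n'=(\gamma\cdot\boldsymbol n)'$, $x\cdot\boldsymbol n''=(\gamma\cdot\boldsymbol n)''$ at $t_1$. (If the denominator vanishes, $\widehat\gamma^*(t_1)$ is at infinity.) *)

theory Defs
  imports "HOL-Analysis.Analysis"
begin

fun vderivs :: "nat \<Rightarrow> (real \<Rightarrow> 'a::real_normed_vector) \<Rightarrow> real \<Rightarrow> 'a" where
  "vderivs 0 f = f"
| "vderivs (Suc k) f = (\<lambda>t. vector_derivative (vderivs k f) (at t))"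

definition smooth_on :: "real set \<Rightarrow> (real \<Rightarrow> 'a::real_normed_vector) \<Rightarrow> bool" where
  "smooth_on I f \<longleftrightarrow>
     (\<forall>k. \<forall>t\<in>I. (vderivs k f has_vector_derivative vderivs (Suc k) f t) (at t))"

(* homogeneous coordinates [-gamma.n : n] in R^4 of the dual-boundary (tangent plane) *)
definition dual_boundary_lift :: "(real \<Rightarrow> real^3) \<Rightarrow> (real \<Rightarrow> real^3) \<Rightarrow> real \<Rightarrow> real^4" where
  "dual_boundary_lift \<gamma> n t = vector [- (\<gamma> t \<bullet> n t), n t $ 1, n t $ 2, n t $ 3]"

(* affine coordinates of a projective curve with homogeneous lift V near t1: we use the standard
   affine chart {x_k = 1} of the first homogeneous coordinate k that is nonzero at t1;
   the affine curve is V/V_k, whose derivatives live in the hyperplane {x_k = 0} = R^3 *)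
definition affine_chart_index :: "(real \<Rightarrow> real^4) \<Rightarrow> real \<Rightarrow> 4" where
  "affine_chart_index V t1 = (SOME k. V t1 $ k \<noteq> 0)"

definition affine_curve :: "(real \<Rightarrow> real^4) \<Rightarrow> real \<Rightarrow> real \<Rightarrow> real^4" where
  "affine_curve V t1 = (\<lambda>t. (1 / V t $ affine_chart_index V t1) *\<^sub>R V t)"

definition affine_deriv_rank :: "(real \<Rightarrow> real^4) \<Rightarrow> real \<Rightarrow> nat \<Rightarrow> nat" where
  "affine_deriv_rank V t1 m =
     dim (span {vderivs j (affine_curve V t1) t1 | j. 1 \<le> j \<and> j \<le> m})"

definition is_type_index :: "(real \<Rightarrow> real^4) \<Rightarrow> real \<Rightarrow> nat \<Rightarrow> nat \<Rightarrow> bool" where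
  "is_type_index V t1 i a \<longleftrightarrow>
     1 \<le> a \<and> affine_deriv_rank V t1 a = i \<and>
     (\<forall>m. 1 \<le> m \<and> m < a \<longrightarrow> affine_deriv_rank V t1 m \<noteq> i)"

definition curve_type_at :: "(real \<Rightarrow> real^4) \<Rightarrow> real \<Rightarrow> nat \<times> nat \<times> nat \<Rightarrow> bool" where
  "curve_type_at V t1 a \<longleftrightarrow>
     (case a of (a1, a2, a3) \<Rightarrow>
        is_type_index V t1 1 a1 \<and> is_type_index V t1 2 a2 \<and> is_type_index V t1 3 a3)"

(* x is the (finite) point dual to the osculating plane of the dual-boundary at t1 *)
definition dual_osc_point :: "(real \<Rightarrow> real^3) \<Rightarrow> (real \<Rightarrow> real^3) \<Rightarrow> real \<Rightarrow> real^3 \<Rightarrow> bool" where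
  "dual_osc_point \<gamma> n t1 x \<longleftrightarrow>
     x \<bullet> n t1 = \<gamma> t1 \<bullet> n t1 \<and>
     x \<bullet> vderivs 1 n t1 = vderivs 1 (\<lambda>t. \<gamma> t \<bullet> n t) t1 \<and>
     x \<bullet> vderivs 2 n t1 = vderivs 2 (\<lambda>t. \<gamma> t \<bullet> n t) t1"

end

theory Submission
  imports Defs
begin

text \<open>
  Put \<open>y = x - \<gamma>(t\<^sub>1)\<close>. The three equations defining \<open>x\<close> say \<open>y \<bullet> n = 0\<close>,
  \<open>y \<bullet> n' = 0\<close> with \<open>n' = -\<kappa>\<^sub>2 e\<^sub>1 - \<kappa>\<^sub>3 e\<^sub>2\<close>, and \<open>y \<bullet> n'' = -\<kappa>\<^sub>2\<close>, because
  \<open>(\<gamma> \<bullet> n)'' = \<gamma> \<bullet> n'' + \<gamma>' \<bullet> n'\<close>. Hence \<open>y = a e\<^sub>1 + b e\<^sub>2\<close> solves a 2\<times>2 linear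
  system; differentiating \<open>\<kappa>\<^sub>2 = -n' \<bullet> e\<^sub>1\<close> and \<open>\<kappa>\<^sub>3 = -n' \<bullet> e\<^sub>2\<close> shows that its
  determinant is the denominator \<open>D\<close> of the formula, and Cramer's rule gives
  \<open>D y = \<kappa>\<^sub>2 (\<kappa>\<^sub>2 e\<^sub>2 - \<kappa>\<^sub>3 e\<^sub>1)\<close>, whence the distance.

  It remains to see \<open>D \<noteq> 0\<close>. If \<open>D = 0\<close>, the last identity forces \<open>\<kappa>\<^sub>2 = 0\<close>, and then
  \<open>n, n', n''\<close> lie in a plane, so the homogeneous lift of the dual-boundary and its first two
  derivatives span at most a plane of \<open>\<real>\<^sup>4\<close>. In an affine chart this makes the first two
  derivatives of the dual-boundary dependent, contradicting \<open>a\<^sub>2 = 2\<close>.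
\<close>

lemma has_vector_derivative_inner:
  fixes f g :: "real \<Rightarrow> 'a::real_inner"
  assumes "(f has_vector_derivative f') (at t)" "(g has_vector_derivative g') (at t)"
  shows "((\<lambda>t. f t \<bullet> g t) has_vector_derivative (f t \<bullet> g' + f' \<bullet> g t)) (at t)"
  by (rule bounded_bilinear.has_vector_derivative[OF bounded_bilinear_inner assms])

lemma has_vector_derivative_component_eq_0:
  fixes f :: "real \<Rightarrow> 'a::real_normed_vector ^ 'n"
  assumes "open U" "t \<in> U" "\<forall>s\<in>U. f s $ k = c" "(f has_vector_derivative f') (at t)"
  shows "f' $ k = 0"
proof -
  have "((\<lambda>s. f s $ k) has_vector_derivative f' $ k) (at t)"
    using bounded_linear.has_vector_derivative[OF bounded_linear_vec_nth assms(4)] by simp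
  moreover have "((\<lambda>s. f s $ k) has_vector_derivative 0) (at t)"
    by (rule has_vector_derivative_transform_within_open[OF has_vector_derivative_const[of c] assms(1,2)])
      (use assms(3) in auto)
  ultimately show ?thesis using vector_derivative_unique_at by blast
qed

lemma orthonormal3_expansion:
  fixes E1 E2 E3 v :: "real^3"
  assumes "E1 \<bullet> E1 = 1" "E2 \<bullet> E2 = 1" "E3 \<bullet> E3 = 1" "E1 \<bullet> E2 = 0" "E1 \<bullet> E3 = 0" "E2 \<bullet> E3 = 0"
  shows "v = (v \<bullet> E1) *\<^sub>R E1 + (v \<bullet> E2) *\<^sub>R E2 + (v \<bullet> E3) *\<^sub>R E3"
proof -
  let ?B = "{E1, E2, E3}"
  have "pairwise orthogonal ?B" "0 \<notin> ?B"
    using assms by (auto simp: pairwise_def orthogonal_def inner_commute)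
  then have "independent ?B" by (rule pairwise_orthogonal_independent)
  moreover have "E1 \<noteq> E2" "E1 \<noteq> E3" "E2 \<noteq> E3" using assms by auto
  then have "card ?B = 3" by simp
  ultimately have span_UNIV: "UNIV \<subseteq> span ?B"
    using card_ge_dim_independent[of ?B UNIV] by simp
  define z where "z = v - ((v \<bullet> E1) *\<^sub>R E1 + (v \<bullet> E2) *\<^sub>R E2 + (v \<bullet> E3) *\<^sub>R E3)"
  have "E2 \<bullet> E1 = 0" "E3 \<bullet> E1 = 0" "E3 \<bullet> E2 = 0" using assms by (simp_all add: inner_commute)
  then have "orthogonal z y" if "y \<in> ?B" for y
    using assms that by (auto simp: z_def orthogonal_def inner_diff_left inner_add_left)
  then have "orthogonal z z" using orthogonal_to_span span_UNIV by blast
  then show ?thesis by (simp add: z_def orthogonal_def)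
qed

lemma vderivs_1_2_at:
  assumes "open U" "t \<in> U" "\<forall>s\<in>U. (f has_vector_derivative f1 s) (at s)"
    and "(f1 has_vector_derivative f2) (at t)"
  shows "vderivs 1 f t = f1 t" "vderivs 2 f t = f2"
proof -
  have "(vderivs 1 f has_vector_derivative f2) (at t)"
    by (rule has_vector_derivative_transform_within_open[OF assms(4,1,2)])
      (use assms(3) vector_derivative_at in fastforce)
  then show "vderivs 2 f t = f2" by (simp add: numeral_2_eq_2 vector_derivative_at)
  show "vderivs 1 f t = f1 t" using assms(2,3) by (simp add: vector_derivative_at)
qed

lemma has_vector_derivative_scaleR_second:
  assumes "t \<in> U"
    and "\<forall>s\<in>U. (g has_real_derivative g1 s) (at s)" "(g1 has_real_derivative g2) (at t)"
    and "\<forall>s\<in>U. (V has_vector_derivative V1 s) (at s)" "(V1 has_vector_derivative V2) (at t)"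
  shows "\<forall>s\<in>U. ((\<lambda>s. g s *\<^sub>R V s) has_vector_derivative g s *\<^sub>R V1 s + g1 s *\<^sub>R V s) (at s)"
    and "((\<lambda>s. g s *\<^sub>R V1 s + g1 s *\<^sub>R V s) has_vector_derivative
          g t *\<^sub>R V2 + (2 * g1 t) *\<^sub>R V1 t + g2 *\<^sub>R V t) (at t)"
proof -
  show "\<forall>s\<in>U. ((\<lambda>s. g s *\<^sub>R V s) has_vector_derivative g s *\<^sub>R V1 s + g1 s *\<^sub>R V s) (at s)"
    using assms(2,4) has_vector_derivative_scaleR by blast
  have "((\<lambda>s. g s *\<^sub>R V1 s + g1 s *\<^sub>R V s) has_vector_derivative
      (g t *\<^sub>R V2 + g1 t *\<^sub>R V1 t) + (g1 t *\<^sub>R V1 t + g2 *\<^sub>R V t)) (at t)"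
    using assms by (intro has_vector_derivative_add has_vector_derivative_scaleR) auto
  then show "((\<lambda>s. g s *\<^sub>R V1 s + g1 s *\<^sub>R V s) has_vector_derivative
      g t *\<^sub>R V2 + (2 * g1 t) *\<^sub>R V1 t + g2 *\<^sub>R V t) (at t)"
    by (simp add: scaleR_2 algebra_simps flip: scaleR_scaleR)
qed

lemma affine_chart_index_nonzero:
  assumes "V t \<noteq> 0"
  shows "V t $ affine_chart_index V t \<noteq> 0"
  unfolding affine_chart_index_def by (rule someI_ex) (use assms vec_eq_iff in force)

lemma affine_curve_derivatives:
  fixes V V1 :: "real \<Rightarrow> real^4"
  assumes U: "open U" "t \<in> U" and V0: "V t \<noteq> 0"
    and dV: "\<forall>s\<in>U. (V has_vector_derivative V1 s) (at s)"
    and dV1: "(V1 has_vector_derivative V2) (at t)"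
  defines "W \<equiv> affine_curve V t" and "k \<equiv> affine_chart_index V t"
  shows "vderivs 1 W t \<in> span {V t, V1 t}" "vderivs 2 W t \<in> span {V t, V1 t, V2}"
    "vderivs 1 W t $ k = 0" "vderivs 2 W t $ k = 0"
proof -
  define h h1 where "h = (\<lambda>s. V s $ k)" and "h1 = (\<lambda>s. V1 s $ k)"
  have hk: "h t \<noteq> 0" using affine_chart_index_nonzero[of V t, OF V0] by (simp add: h_def k_def)
  have dh: "(h has_real_derivative h1 s) (at s)" if "s \<in> U" for s
    using bounded_linear.has_vector_derivative[OF bounded_linear_vec_nth dV[rule_format, OF that]]
    by (simp add: h_def h1_def has_real_derivative_iff_has_vector_derivative)
  have dh1: "(h1 has_real_derivative V2 $ k) (at t)"
    using bounded_linear.has_vector_derivative[OF bounded_linear_vec_nth dV1]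
    by (simp add: h1_def has_real_derivative_iff_has_vector_derivative)
  define U' where "U' = U \<inter> h -` (- {0})"
  have "continuous_on U h"
    using dh by (meson DERIV_isCont U(1) continuous_on_eq_continuous_at)
  then have U': "open U'" "t \<in> U'" "U' \<subseteq> U"
    using continuous_open_preimage[OF _ U(1), of h "- {0}"] U hk by (auto simp: U'_def)
  have hnz: "h s \<noteq> 0" if "s \<in> U'" for s using that by (auto simp: U'_def)
  define g g1 where "g = (\<lambda>s. inverse (h s))" and "g1 = (\<lambda>s. - (h1 s * inverse (h s ^ Suc (Suc 0))))"
  have dg: "\<forall>s\<in>U'. (g has_real_derivative g1 s) (at s)"
    unfolding g_def g1_def using DERIV_inverse_fun[OF dh hnz] U'(3) by blast
  obtain g2 where dg1: "(g1 has_real_derivative g2) (at t)"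
    unfolding g1_def
    using DERIV_minus[OF DERIV_mult[OF dh1 DERIV_inverse_fun[OF DERIV_power[OF dh[OF U(2)]]]]] hk
    by fastforce
  have W: "W = (\<lambda>s. g s *\<^sub>R V s)"
    by (simp add: W_def affine_curve_def g_def h_def k_def inverse_eq_divide)
  have "\<forall>s\<in>U'. (V has_vector_derivative V1 s) (at s)" using dV U'(3) by blast
  note dW = has_vector_derivative_scaleR_second[OF U'(2) dg dg1 this dV1, folded W]
  have W': "vderivs 1 W t = g t *\<^sub>R V1 t + g1 t *\<^sub>R V t"
    "vderivs 2 W t = g t *\<^sub>R V2 + (2 * g1 t) *\<^sub>R V1 t + g2 *\<^sub>R V t"
    using vderivs_1_2_at[OF U'(1,2) dW] by simp_all
  show "vderivs 1 W t \<in> span {V t, V1 t}" "vderivs 2 W t \<in> span {V t, V1 t, V2}"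
    unfolding W' by (intro span_add span_scale span_base; simp)+
  have "\<forall>s\<in>U'. W s $ k = 1" using hnz by (simp add: W g_def h_def)
  then have "\<forall>s\<in>U'. (g s *\<^sub>R V1 s + g1 s *\<^sub>R V s) $ k = 0"
    using has_vector_derivative_component_eq_0[OF U'(1) _ _ dW(1)[rule_format]] by blast
  then show "vderivs 1 W t $ k = 0" "vderivs 2 W t $ k = 0"
    using has_vector_derivative_component_eq_0[OF U'(1,2) _ dW(2)] U'(2) unfolding W' by auto
qed

lemma affine_deriv_rank_2_le_1:
  fixes V V1 :: "real \<Rightarrow> real^4"
  assumes "open U" "t \<in> U" "V t \<noteq> 0"
    and "\<forall>s\<in>U. (V has_vector_derivative V1 s) (at s)" "(V1 has_vector_derivative V2) (at t)"
    and degenerate: "dim {V t, V1 t, V2} \<le> 2"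
  shows "affine_deriv_rank V t 2 \<le> 1"
proof -
  define W where "W = affine_curve V t"
  define k where "k = affine_chart_index V t"
  note W = affine_curve_derivatives[OF assms(1-5), folded W_def k_def]
  have "{vderivs j W t | j. 1 \<le> j \<and> j \<le> 2} = {vderivs 1 W t, vderivs 2 W t}"
    by (auto simp del: vderivs.simps simp: le_Suc_eq numeral_2_eq_2)
  then have rank: "affine_deriv_rank V t 2 = dim {vderivs 1 W t, vderivs 2 W t}"
    by (simp add: affine_deriv_rank_def W_def)
  have "span {vderivs 1 W t, vderivs 2 W t} \<subseteq> {u. u $ k = 0}"
    using W(3,4) by (intro span_minimal) (auto simp: subspace_def)
  moreover have "V t $ k \<noteq> 0" using affine_chart_index_nonzero[of V t, OF assms(3)] by (simp add: k_def)
  ultimately have "dim {vderivs 1 W t, vderivs 2 W t} + 1 = dim (insert (V t) {vderivs 1 W t, vderivs 2 W t})"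
    by (auto simp: dim_insert)
  also have "\<dots> \<le> dim {V t, V1 t, V2}"
    using W(1,2) span_mono[of "{V t, V1 t}" "{V t, V1 t, V2}"]
    by (intro dim_mono) (auto intro: span_base)
  finally show ?thesis using rank degenerate by simp
qed

definition homogeneous :: "real \<Rightarrow> real^3 \<Rightarrow> real^4" where
  "homogeneous c u = vector [c, u$1, u$2, u$3]"

lemma homogeneous_eq: "homogeneous c u = c *\<^sub>R axis 1 1 + homogeneous 0 u"
  by (simp add: homogeneous_def vec_eq_iff forall_4 vector_def axis_def)

lemma linear_homogeneous_0: "linear (homogeneous 0)"
  by (rule linearI) (simp_all add: homogeneous_def vec_eq_iff forall_4 vector_def)

lemma homogeneous_add: "homogeneous (c + c') (u + v) = homogeneous c u + homogeneous c' v"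
  by (simp add: homogeneous_def vec_eq_iff forall_4 vector_def)

lemma homogeneous_scaleR: "homogeneous (r * c) (r *\<^sub>R u) = r *\<^sub>R homogeneous c u"
  by (simp add: homogeneous_def vec_eq_iff forall_4 vector_def)

lemma homogeneous_eq_0_iff: "homogeneous c u = 0 \<longleftrightarrow> c = 0 \<and> u = 0"
  by (simp add: homogeneous_def vec_eq_iff forall_4 forall_3 vector_def)

lemma dual_boundary_lift_eq: "dual_boundary_lift \<gamma> n t = homogeneous (- (\<gamma> t \<bullet> n t)) (n t)"
  by (simp add: dual_boundary_lift_def homogeneous_def)

lemma has_vector_derivative_homogeneous:
  assumes "(c has_real_derivative c') (at t)" "(u has_vector_derivative u') (at t)"
  shows "((\<lambda>s. homogeneous (c s) (u s)) has_vector_derivative homogeneous c' u') (at t)"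
proof -
  have "((\<lambda>s. c s *\<^sub>R axis 1 1) has_vector_derivative c' *\<^sub>R axis 1 1) (at t)"
    using has_vector_derivative_scaleR[OF assms(1) has_vector_derivative_const] by simp
  moreover have "((\<lambda>s. homogeneous 0 (u s)) has_vector_derivative homogeneous 0 u') (at t)"
    using linear_homogeneous_0 assms(2)
    by (simp add: linear_conv_bounded_linear bounded_linear.has_vector_derivative)
  ultimately show ?thesis
    using has_vector_derivative_add by (fastforce simp: homogeneous_eq[symmetric])
qed

locale adapted_frame =
  fixes I :: "real set" and \<gamma> e1 e2 e3 :: "real \<Rightarrow> real^3" and \<kappa>1 \<kappa>2 \<kappa>3 :: "real \<Rightarrow> real"
  assumes open_I: "open I"
    and smooth_e3: "smooth_on I e3"
    and arclength: "\<forall>t\<in>I. (\<gamma> has_vector_derivative e1 t) (at t) \<and> norm (e1 t) = 1"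
    and normal: "\<forall>t\<in>I. norm (e3 t) = 1 \<and> e3 t \<bullet> e1 t = 0"
    and e2_eq: "\<forall>t\<in>I. e2 t = cross3 (e3 t) (e1 t)"
    and frame1: "\<forall>t\<in>I. (e1 has_vector_derivative (\<kappa>1 t *\<^sub>R e2 t + \<kappa>2 t *\<^sub>R e3 t)) (at t)"
    and frame2: "\<forall>t\<in>I. (e2 has_vector_derivative (- \<kappa>1 t *\<^sub>R e1 t + \<kappa>3 t *\<^sub>R e3 t)) (at t)"
    and frame3: "\<forall>t\<in>I. (e3 has_vector_derivative (- \<kappa>2 t *\<^sub>R e1 t - \<kappa>3 t *\<^sub>R e2 t)) (at t)"
begin

lemma frame_orthonormal:
  assumes "t \<in> I"
  shows "e1 t \<bullet> e1 t = 1" "e2 t \<bullet> e2 t = 1" "e3 t \<bullet> e3 t = 1"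
    "e1 t \<bullet> e2 t = 0" "e1 t \<bullet> e3 t = 0" "e2 t \<bullet> e3 t = 0"
    "e2 t \<bullet> e1 t = 0" "e3 t \<bullet> e1 t = 0" "e3 t \<bullet> e2 t = 0"
proof -
  have unit: "norm (e1 t) = 1" "norm (e3 t) = 1" and "e3 t \<bullet> e1 t = 0"
    using arclength normal assms by auto
  moreover have e2: "e2 t = cross3 (e3 t) (e1 t)" using e2_eq assms by auto
  ultimately have "(norm (e2 t))\<^sup>2 = 1" using norm_cross_dot[of "e3 t" "e1 t"] by simp
  then show "e2 t \<bullet> e2 t = 1" by (simp add: power2_norm_eq_inner)
  show "e1 t \<bullet> e1 t = 1" "e3 t \<bullet> e3 t = 1" using unit by (simp_all add: dot_square_norm)
  show "e3 t \<bullet> e1 t = 0" "e1 t \<bullet> e3 t = 0"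
    using \<open>e3 t \<bullet> e1 t = 0\<close> by (simp_all add: inner_commute)
  show "e2 t \<bullet> e1 t = 0" "e2 t \<bullet> e3 t = 0" "e1 t \<bullet> e2 t = 0" "e3 t \<bullet> e2 t = 0"
    unfolding e2 by (simp_all add: dot_cross_self inner_commute)
qed

lemma normal_derivative:
  assumes "t \<in> I"
  shows "(e3 has_vector_derivative vderivs 1 e3 t) (at t)"
    and "vderivs 1 e3 t = - \<kappa>2 t *\<^sub>R e1 t - \<kappa>3 t *\<^sub>R e2 t"
proof -
  show d: "(e3 has_vector_derivative vderivs 1 e3 t) (at t)"
    using smooth_e3 assms unfolding smooth_on_def by (metis vderivs.simps(1) One_nat_def)
  show "vderivs 1 e3 t = - \<kappa>2 t *\<^sub>R e1 t - \<kappa>3 t *\<^sub>R e2 t"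
    using vector_derivative_unique_at[OF d] frame3 assms by blast
qed

lemma normal_derivative2: "t \<in> I \<Longrightarrow> (vderivs 1 e3 has_vector_derivative vderivs 2 e3 t) (at t)"
  using smooth_e3 unfolding smooth_on_def by (metis numeral_2_eq_2 One_nat_def)

lemma deriv_normal_component:
  assumes t: "t \<in> I" and de: "(e has_vector_derivative e') (at t)"
    and f: "\<forall>s\<in>I. f s = - (vderivs 1 e3 s \<bullet> e s)"
  shows "deriv f t = - (vderivs 1 e3 t \<bullet> e' + vderivs 2 e3 t \<bullet> e t)"
proof -
  have "((\<lambda>s. - (vderivs 1 e3 s \<bullet> e s)) has_real_derivative
      - (vderivs 1 e3 t \<bullet> e' + vderivs 2 e3 t \<bullet> e t)) (at t)"
    using has_vector_derivative_minus[OF has_vector_derivative_inner[OF normal_derivative2[OF t] de]]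
    by (simp add: has_real_derivative_iff_has_vector_derivative)
  then have "(f has_real_derivative - (vderivs 1 e3 t \<bullet> e' + vderivs 2 e3 t \<bullet> e t)) (at t)"
    using has_field_derivative_transform_within_open[OF _ open_I t] f by force
  then show ?thesis by (rule DERIV_imp_deriv)
qed

lemma deriv_kappa2:
  assumes "t \<in> I"
  shows "deriv \<kappa>2 t = \<kappa>1 t * \<kappa>3 t - vderivs 2 e3 t \<bullet> e1 t"
proof -
  have "\<forall>s\<in>I. \<kappa>2 s = - (vderivs 1 e3 s \<bullet> e1 s)"
    using frame_orthonormal normal_derivative(2) by (simp add: inner_diff_left)
  from deriv_normal_component[OF assms frame1[rule_format, OF assms] this] show ?thesis
    using frame_orthonormal[OF assms] unfolding normal_derivative(2)[OF assms]
    by (simp add: inner_add_right inner_diff_right inner_diff_left algebra_simps)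
qed

lemma deriv_kappa3:
  assumes "t \<in> I"
  shows "deriv \<kappa>3 t = - \<kappa>1 t * \<kappa>2 t - vderivs 2 e3 t \<bullet> e2 t"
proof -
  have "\<forall>s\<in>I. \<kappa>3 s = - (vderivs 1 e3 s \<bullet> e2 s)"
    using frame_orthonormal normal_derivative(2) by (simp add: inner_diff_left)
  from deriv_normal_component[OF assms frame2[rule_format, OF assms] this] show ?thesis
    using frame_orthonormal[OF assms] unfolding normal_derivative(2)[OF assms]
    by (simp add: inner_add_right inner_diff_right inner_diff_left algebra_simps)
qed

lemma support_derivative:
  assumes "t \<in> I"
  shows "((\<lambda>s. \<gamma> s \<bullet> e3 s) has_real_derivative \<gamma> t \<bullet> vderivs 1 e3 t) (at t)"
  using has_vector_derivative_inner[OF conjunct1[OF arclength[rule_format, OF assms]]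
      normal_derivative(1)[OF assms]] frame_orthonormal[OF assms]
  by (simp add: has_real_derivative_iff_has_vector_derivative)

lemma support_derivative2:
  assumes "t \<in> I"
  shows "((\<lambda>s. \<gamma> s \<bullet> vderivs 1 e3 s) has_real_derivative \<gamma> t \<bullet> vderivs 2 e3 t - \<kappa>2 t) (at t)"
  using has_vector_derivative_inner[OF conjunct1[OF arclength[rule_format, OF assms]]
      normal_derivative2[OF assms]] frame_orthonormal[OF assms]
  unfolding normal_derivative(2)[OF assms]
  by (simp add: has_real_derivative_iff_has_vector_derivative inner_diff_right)

lemma dual_osc_point_conditions:
  assumes t: "t \<in> I" and x: "dual_osc_point \<gamma> e3 t x"
  shows "(x - \<gamma> t) \<bullet> e3 t = 0" "(x - \<gamma> t) \<bullet> vderivs 1 e3 t = 0"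
    "(x - \<gamma> t) \<bullet> vderivs 2 e3 t = - \<kappa>2 t"
proof -
  have "\<forall>s\<in>I. ((\<lambda>s. \<gamma> s \<bullet> e3 s) has_vector_derivative \<gamma> s \<bullet> vderivs 1 e3 s) (at s)"
    "((\<lambda>s. \<gamma> s \<bullet> vderivs 1 e3 s) has_vector_derivative \<gamma> t \<bullet> vderivs 2 e3 t - \<kappa>2 t) (at t)"
    using support_derivative support_derivative2[OF t]
    by (simp_all add: has_real_derivative_iff_has_vector_derivative)
  note F = vderivs_1_2_at[OF open_I t this]
  show "(x - \<gamma> t) \<bullet> e3 t = 0" "(x - \<gamma> t) \<bullet> vderivs 1 e3 t = 0"
    "(x - \<gamma> t) \<bullet> vderivs 2 e3 t = - \<kappa>2 t"
    using x F unfolding dual_osc_point_def by (simp_all add: inner_diff_left del: vderivs.simps)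
qed

definition osc_denominator :: "real \<Rightarrow> real" where
  "osc_denominator t =
     \<kappa>2 t * (deriv \<kappa>3 t + \<kappa>1 t * \<kappa>2 t) + \<kappa>3 t * (- deriv \<kappa>2 t + \<kappa>1 t * \<kappa>3 t)"

lemma osc_denominator_eq:
  "t \<in> I \<Longrightarrow> osc_denominator t = \<kappa>3 t * (vderivs 2 e3 t \<bullet> e1 t) - \<kappa>2 t * (vderivs 2 e3 t \<bullet> e2 t)"
  by (simp add: osc_denominator_def deriv_kappa2 deriv_kappa3 algebra_simps del: vderivs.simps)

lemma dual_osc_point_offset:
  assumes t: "t \<in> I" and x: "dual_osc_point \<gamma> e3 t x"
  shows "osc_denominator t *\<^sub>R (x - \<gamma> t) = \<kappa>2 t *\<^sub>R (\<kappa>2 t *\<^sub>R e2 t - \<kappa>3 t *\<^sub>R e1 t)"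
proof -
  define a b where "a = (x - \<gamma> t) \<bullet> e1 t" and "b = (x - \<gamma> t) \<bullet> e2 t"
  define A B where "A = vderivs 2 e3 t \<bullet> e1 t" and "B = vderivs 2 e3 t \<bullet> e2 t"
  note orth = frame_orthonormal[OF t]
  note cond = dual_osc_point_conditions[OF t x]
  have offset: "x - \<gamma> t = a *\<^sub>R e1 t + b *\<^sub>R e2 t"
    using orthonormal3_expansion[OF orth(1-6), of "x - \<gamma> t"] cond(1) by (simp add: a_def b_def)
  have "- \<kappa>2 t * a - \<kappa>3 t * b = 0"
    using cond(2) orth unfolding normal_derivative(2)[OF t] offset
    by (simp add: inner_add_left inner_diff_right algebra_simps)
  moreover have "a * A + b * B = - \<kappa>2 t"
    using cond(3) unfolding offset
    by (simp add: A_def B_def inner_add_left inner_add_right inner_commute del: vderivs.simps)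
  ultimately have "osc_denominator t * a = - \<kappa>2 t * \<kappa>3 t" "osc_denominator t * b = (\<kappa>2 t)\<^sup>2"
    unfolding osc_denominator_eq[OF t, folded A_def B_def] power2_eq_square by algebra+
  then show ?thesis by (simp add: offset scaleR_add_right algebra_simps power2_eq_square)
qed

lemma dual_boundary_lift_derivative:
  assumes "t \<in> I"
  shows "(dual_boundary_lift \<gamma> e3 has_vector_derivative
      homogeneous (- (\<gamma> t \<bullet> vderivs 1 e3 t)) (vderivs 1 e3 t)) (at t)"
  unfolding dual_boundary_lift_eq[abs_def]
  by (intro has_vector_derivative_homogeneous DERIV_minus support_derivative normal_derivative assms)

lemma dual_boundary_lift_derivative2:
  assumes "t \<in> I"
  shows "((\<lambda>s. homogeneous (- (\<gamma> s \<bullet> vderivs 1 e3 s)) (vderivs 1 e3 s)) has_vector_derivative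
      homogeneous (- (\<gamma> t \<bullet> vderivs 2 e3 t - \<kappa>2 t)) (vderivs 2 e3 t)) (at t)"
  by (intro has_vector_derivative_homogeneous DERIV_minus support_derivative2 normal_derivative2 assms)

lemma dual_boundary_lift_rank_le_1:
  assumes t: "t \<in> I" and flat: "\<kappa>2 t = 0" and "osc_denominator t = 0"
  shows "affine_deriv_rank (dual_boundary_lift \<gamma> e3) t 2 \<le> 1"
proof -
  define L where "L u = homogeneous (- (\<gamma> t \<bullet> u)) u" for u
  have "linear L"
    by (rule linearI)
      (simp_all add: L_def inner_add_right homogeneous_add[symmetric] homogeneous_scaleR[symmetric])
  note orth = frame_orthonormal[OF t]
  obtain P Q where PQ: "{e3 t, vderivs 1 e3 t, vderivs 2 e3 t} \<subseteq> span {P, Q}"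
  proof (cases "\<kappa>3 t = 0")
    case True
    then have "vderivs 1 e3 t = 0" using normal_derivative(2)[OF t] flat by simp
    then show ?thesis by (intro that[of "e3 t" "vderivs 2 e3 t"]) (auto intro: span_base span_zero)
  next
    case False
    then have "vderivs 2 e3 t \<bullet> e1 t = 0" using osc_denominator_eq[OF t] assms(2,3) by simp
    then have n2: "vderivs 2 e3 t = (vderivs 2 e3 t \<bullet> e2 t) *\<^sub>R e2 t + (vderivs 2 e3 t \<bullet> e3 t) *\<^sub>R e3 t"
      using orthonormal3_expansion[OF orth(1-6), of "vderivs 2 e3 t"] by simp
    have "vderivs 2 e3 t \<in> span {e2 t, e3 t}"
      by (subst n2) (intro span_add span_scale span_base; simp)
    moreover have "vderivs 1 e3 t \<in> span {e2 t, e3 t}"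
      using normal_derivative(2)[OF t] flat by (simp add: span_base span_scale span_neg)
    ultimately show ?thesis by (intro that[of "e2 t" "e3 t"]) (simp add: span_base)
  qed
  have "dim (L ` {e3 t, vderivs 1 e3 t, vderivs 2 e3 t}) \<le> card (L ` {P, Q})"
    using PQ span_linear_image[OF \<open>linear L\<close>, of "{P, Q}"] by (intro dim_le_card) auto
  also have "\<dots> \<le> 2" by (simp add: card_insert_if)
  finally have "dim {dual_boundary_lift \<gamma> e3 t, L (vderivs 1 e3 t), L (vderivs 2 e3 t)} \<le> 2"
    by (simp add: L_def dual_boundary_lift_eq)
  moreover have "dual_boundary_lift \<gamma> e3 t \<noteq> 0"
    using orth(3) by (auto simp: dual_boundary_lift_eq homogeneous_eq_0_iff)
  ultimately show ?thesis
    using affine_deriv_rank_2_le_1[OF open_I t _ _ dual_boundary_lift_derivative2[OF t]]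
      dual_boundary_lift_derivative flat by (simp add: L_def)
qed

end

theorem proposition3p6:
  fixes I :: "real set" and t1 :: real and r :: nat
    and \<gamma> e1 e2 e3 :: "real \<Rightarrow> real^3"
    and \<kappa>1 \<kappa>2 \<kappa>3 :: "real \<Rightarrow> real"
    and x :: "real^3"
  assumes I: "open I" "t1 \<in> I"
    and smooth: "smooth_on I \<gamma>" "smooth_on I e3"
    and arclength: "\<forall>t\<in>I. (\<gamma> has_vector_derivative e1 t) (at t) \<and> norm (e1 t) = 1"
    and normal: "\<forall>t\<in>I. norm (e3 t) = 1 \<and> e3 t \<bullet> e1 t = 0"
    and e2def: "\<forall>t\<in>I. e2 t = cross3 (e3 t) (e1 t)"
    and frame1: "\<forall>t\<in>I. (e1 has_vector_derivative (\<kappa>1 t *\<^sub>R e2 t + \<kappa>2 t *\<^sub>R e3 t)) (at t)"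
    and frame2: "\<forall>t\<in>I. (e2 has_vector_derivative (- \<kappa>1 t *\<^sub>R e1 t + \<kappa>3 t *\<^sub>R e3 t)) (at t)"
    and frame3: "\<forall>t\<in>I. (e3 has_vector_derivative (- \<kappa>2 t *\<^sub>R e1 t - \<kappa>3 t *\<^sub>R e2 t)) (at t)"
    and r: "0 < r"
    and type: "curve_type_at (dual_boundary_lift \<gamma> e3) t1 (1, 2, 2 + r)"
    and x: "dual_osc_point \<gamma> e3 t1 x"
  shows "dist (\<gamma> t1) x =
    \<bar>\<kappa>2 t1 * sqrt ((\<kappa>2 t1)\<^sup>2 + (\<kappa>3 t1)\<^sup>2) /
      (\<kappa>2 t1 * (deriv \<kappa>3 t1 + \<kappa>1 t1 * \<kappa>2 t1)
       + \<kappa>3 t1 * (- deriv \<kappa>2 t1 + \<kappa>1 t1 * \<kappa>3 t1))\<bar>"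
proof -
  interpret adapted_frame I \<gamma> e1 e2 e3 \<kappa>1 \<kappa>2 \<kappa>3
    using I(1) smooth(2) arclength normal e2def frame1 frame2 frame3 by unfold_locales
  note orth = frame_orthonormal[OF I(2)]
  have offset: "osc_denominator t1 *\<^sub>R (x - \<gamma> t1) = \<kappa>2 t1 *\<^sub>R (\<kappa>2 t1 *\<^sub>R e2 t1 - \<kappa>3 t1 *\<^sub>R e1 t1)"
    by (rule dual_osc_point_offset[OF I(2) x])
  have D: "osc_denominator t1 \<noteq> 0"
  proof
    assume D0: "osc_denominator t1 = 0"
    have "\<kappa>2 t1 * \<kappa>2 t1 = (\<kappa>2 t1 *\<^sub>R (\<kappa>2 t1 *\<^sub>R e2 t1 - \<kappa>3 t1 *\<^sub>R e1 t1)) \<bullet> e2 t1"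
      using orth by (simp add: inner_diff_left)
    also have "\<dots> = 0" using offset D0 by (metis inner_zero_left scaleR_zero_left)
    finally have "\<kappa>2 t1 = 0" by simp
    moreover have "affine_deriv_rank (dual_boundary_lift \<gamma> e3) t1 2 = 2"
      using type by (simp add: curve_type_at_def is_type_index_def)
    ultimately show False using dual_boundary_lift_rank_le_1[OF I(2) _ D0] by simp
  qed
  have "norm (\<kappa>2 t1 *\<^sub>R e2 t1 - \<kappa>3 t1 *\<^sub>R e1 t1) = sqrt ((\<kappa>2 t1)\<^sup>2 + (\<kappa>3 t1)\<^sup>2)"
    using orth by (simp add: norm_eq_sqrt_inner inner_diff_left inner_diff_right power2_eq_square)
  with arg_cong[OF offset, of norm]
  have "\<bar>osc_denominator t1\<bar> * dist (\<gamma> t1) x = \<bar>\<kappa>2 t1\<bar> * sqrt ((\<kappa>2 t1)\<^sup>2 + (\<kappa>3 t1)\<^sup>2)"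
    by (simp only: norm_scaleR dist_norm norm_minus_commute)
  with D show ?thesis
    unfolding osc_denominator_def[symmetric] by (simp add: abs_divide abs_mult field_simps)
qed

end
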